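(* Let $n\ge1$, $G(x)=e^{-\pi|x|^2}$, and $\mathcal{M}_G(\mu)(x)=\sup_{r>0}G_r*\mu(x)$ where $G_r(x)=r^{-n}G(x/r)$. Then for every finite positive measure $V$ on $\mathbb{R}^n$ absolutely continuous with respect to Lebesgue measure and every fixed $\rho>0$, $$\lim_{t\to0^+}\Big\|\mathcal{M}_G(V_t)(x)-\Big(\frac{n}{2\pi e}\Big)^{\frac n2}\frac{V(\mathbb{R}^n)}{|x|^n}\Big\|_{L^{1,\infty}(\mathbb{R}^n\setminus B(0,\rho),\,dx)}=0.$$
   Context: $G_r*\mu(x)=\int_{\mathbb{R}^n}G_r(x-y)\,d\mu(y)$. $V_t(E)=V(E/t)$ with $E/t=\{x/t:x\in E\}$. For a measurable set $E$, $\|f\|_{L^{1,\infty}(E)}=\sup_{\lambda>0}\lambda|\{x\in E:|f(x)|>\lambda\}|$. *)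

theory Defs
  imports "HOL-Analysis.Analysis"
begin

definition gauss_kernel :: "real \<Rightarrow> 'a::euclidean_space \<Rightarrow> real" where
  "gauss_kernel r z = r powr (- real DIM('a)) * exp (- pi * (norm z / r)\<^sup>2)"

definition gauss_max :: "'a::euclidean_space measure \<Rightarrow> 'a \<Rightarrow> ennreal" where
  "gauss_max \<mu> x = (SUP r\<in>{0<..}. \<integral>\<^sup>+ y. ennreal (gauss_kernel r (x - y)) \<partial>\<mu>)"

text \<open>Dilated measure V_t(E) = V(E/t), i.e. the push-forward of V under y \<mapsto> t y.\<close>
definition dilate_measure :: "real \<Rightarrow> 'a::euclidean_space measure \<Rightarrow> 'a measure" where
  "dilate_measure t V = distr V borel (\<lambda>y. t *\<^sub>R y)"

definition weak_L1_norm :: "'a::euclidean_space set \<Rightarrow> ('a \<Rightarrow> ereal) \<Rightarrow> ennreal" where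
  "weak_L1_norm E f = (SUP s\<in>{0<..}. ennreal s * emeasure lebesgue {x\<in>E. ereal s < \<bar>f x\<bar>})"

end

theory Submission
  imports Defs
begin

text \<open>Write \<open>c\<^sub>n = (n/(2\<pi>e))\<^bsup>n/2\<^esup>\<close>; then \<open>sup\<^sub>r\<^sub>>\<^sub>0 G\<^sub>r(z) = c\<^sub>n/|z|\<^sup>n\<close>.
  Split \<open>V\<close> into its part on a ball \<open>B(0,R)\<close> and a tail of mass at most \<open>\<eta>\<close>.
  After dilation by \<open>t\<close> the first part lives in \<open>B(0,tR)\<close>, which is tiny compared with
  \<open>|x| \<ge> \<rho>\<close>, so its maximal function at \<open>x\<close> is \<open>c\<^sub>n V(B(0,R))/|x|\<^sup>n\<close> up to a factor
  tending to \<open>1\<close> as \<open>t \<rightarrow> 0\<close>. The tail contributes more than \<open>s/2\<close> only on a set of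
  measure \<open>O(\<eta>/s)\<close>, by the weak type \<open>(1,1)\<close> bound for the Gaussian maximal function
  (decompose \<open>G\<^sub>r\<close> into shells and apply Vitali's covering lemma). The remaining error
  \<open>O(\<epsilon> V(\<real>\<^sup>n) + \<eta>)/|x|\<^sup>n\<close> is below \<open>s/2\<close> outside a ball of measure
  \<open>O((\<epsilon> V(\<real>\<^sup>n) + \<eta>)/s)\<close>. So \<open>s\<close> times the measure of the exceptional set is
  \<open>O(\<epsilon> V(\<real>\<^sup>n) + \<eta>)\<close> uniformly in \<open>s\<close>.\<close>

text \<open>\<open>gauss_peak n\<close> is \<open>c\<^sub>n\<close>; the supremum over \<open>r\<close> is attained at \<open>r = |z| \<surd>(2\<pi>/n)\<close>.\<close>

definition gauss_peak :: "nat \<Rightarrow> real" where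
  "gauss_peak n = (real n / (2 * pi * exp 1)) powr (real n / 2)"

lemma gauss_peak_pos: "n > 0 \<Longrightarrow> gauss_peak n > 0"
  unfolding gauss_peak_def by simp

lemma gauss_kernel_pos: "r > 0 \<Longrightarrow> gauss_kernel r z > 0"
  unfolding gauss_kernel_def by simp

text \<open>With \<open>w = 2\<pi>|z|\<^sup>2/(n r\<^sup>2)\<close>, the inequality \<open>ln w \<le> w - 1\<close> is exactly
  \<open>ln G\<^sub>r(z) \<le> ln (gauss_peak n / |z|\<^sup>n)\<close>.\<close>

lemma gauss_kernel_le_peak:
  fixes z :: "'a::euclidean_space"
  assumes r: "r > 0" and z: "z \<noteq> 0"
  shows "gauss_kernel r z \<le> gauss_peak DIM('a) / norm z ^ DIM('a)"
proof -
  define n where "n = real DIM('a)"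
  define a where "a = norm z"
  have n: "n > 0" unfolding n_def by simp
  have a: "a > 0" using z unfolding a_def by simp
  define w where "w = 2 * pi * a\<^sup>2 / (n * r\<^sup>2)"
  have w: "w > 0" unfolding w_def using n a r by simp
  have ln_w: "ln w = ln 2 + ln pi + 2 * ln a - ln n - 2 * ln r"
    unfolding w_def using n a r by (simp add: ln_mult ln_div ln_realpow)
  have key: "(n/2) * ln w \<le> (n/2) * (w - 1)"
    using ln_le_minus_one[OF w] n by (simp add: mult_left_mono)
  have nw: "(n/2) * w = pi * a\<^sup>2 / r\<^sup>2" unfolding w_def using n r by (simp add: field_simps)
  have lhs: "ln (gauss_kernel r z) = - n * ln r - pi * a\<^sup>2 / r\<^sup>2"
    unfolding gauss_kernel_def n_def[symmetric] a_def[symmetric] using r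
    by (simp add: ln_mult ln_powr power_divide)
  have rhs: "ln (gauss_peak DIM('a) / a ^ DIM('a)) = (n/2) * (ln n - ln 2 - ln pi - 1) - n * ln a"
    using n a by (simp add: gauss_peak_def ln_div ln_mult ln_powr ln_realpow n_def)
  have "ln (gauss_kernel r z) \<le> ln (gauss_peak DIM('a) / a ^ DIM('a))"
    unfolding lhs rhs using key nw ln_w by (simp add: algebra_simps)
  moreover have "gauss_peak DIM('a) / a ^ DIM('a) > 0" using a by (simp add: gauss_peak_pos)
  ultimately show ?thesis using gauss_kernel_pos[OF r, of z] unfolding a_def by simp
qed

lemma gauss_kernel_optimal_radius:
  fixes x z :: "'a::euclidean_space"
  assumes x: "x \<noteq> 0"
  shows "gauss_kernel (norm x * sqrt (2 * pi / DIM('a))) z =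
     gauss_peak DIM('a) / norm x ^ DIM('a) *
     exp (DIM('a) / 2 - DIM('a) * (norm z)\<^sup>2 / (2 * (norm x)\<^sup>2))"
proof -
  define n where "n = real DIM('a)"
  define a where "a = norm x"
  have n: "n > 0" unfolding n_def by simp
  have a: "a > 0" using x unfolding a_def by simp
  define r where "r = a * sqrt (2 * pi / n)"
  have r: "r > 0" unfolding r_def using n a by simp
  have "r\<^sup>2 = a\<^sup>2 * (2 * pi / n)" unfolding r_def using n by (simp add: power_mult_distrib)
  hence exponent: "pi * (norm z)\<^sup>2 / r\<^sup>2 = n * (norm z)\<^sup>2 / (2 * a\<^sup>2)"
    using n a r by (simp add: field_simps)
  have ln_r: "ln r = ln a + (ln 2 + ln pi - ln n) / 2"
    unfolding r_def using n a by (simp add: ln_mult ln_div ln_sqrt)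
  have "ln (gauss_kernel r z) = - n * ln r - pi * (norm z)\<^sup>2 / r\<^sup>2"
    unfolding gauss_kernel_def n_def[symmetric] using r by (simp add: ln_mult ln_powr power_divide)
  also have "\<dots> = ln (gauss_peak DIM('a) / a ^ DIM('a) * exp (n / 2 - n * (norm z)\<^sup>2 / (2 * a\<^sup>2)))"
    using n a unfolding exponent ln_r
    by (simp add: gauss_peak_def ln_div ln_mult ln_powr ln_realpow n_def field_simps)
  finally have "ln (gauss_kernel r z) = \<dots>" .
  moreover have "gauss_peak DIM('a) / a ^ DIM('a) * exp (n / 2 - n * (norm z)\<^sup>2 / (2 * a\<^sup>2)) > 0"
    using a by (simp add: gauss_peak_pos)
  ultimately show ?thesis using gauss_kernel_pos[OF r, of z] unfolding n_def a_def r_def by simp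
qed

lemma gauss_kernel_optimal_radius_ge:
  fixes x z :: "'a::euclidean_space"
  assumes \<rho>: "0 < \<rho>" "\<rho> \<le> norm x" and d: "d \<ge> 0" and z: "norm z \<le> norm x + d"
  shows "gauss_peak DIM('a) / norm x ^ DIM('a) * exp (- DIM('a) * (d / \<rho> + d\<^sup>2 / (2 * \<rho>\<^sup>2)))
     \<le> gauss_kernel (norm x * sqrt (2 * pi / DIM('a))) z"
proof -
  define n where "n = real DIM('a)"
  define a where "a = norm x"
  have n: "n > 0" unfolding n_def by simp
  have a: "\<rho> \<le> a" "a > 0" using \<rho> unfolding a_def by auto
  have "n * (norm z)\<^sup>2 / (2 * a\<^sup>2) \<le> n * (a + d)\<^sup>2 / (2 * a\<^sup>2)"
    using z d n a by (intro divide_right_mono mult_left_mono power_mono) (auto simp: a_def)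
  also have "\<dots> = n / 2 + n * (d / a + d\<^sup>2 / (2 * a\<^sup>2))"
    using a by (simp add: field_simps power2_eq_square)
  also have "\<dots> \<le> n / 2 + n * (d / \<rho> + d\<^sup>2 / (2 * \<rho>\<^sup>2))"
    using a d \<rho> n by (intro add_left_mono mult_left_mono add_mono divide_left_mono) (auto simp: power_mono)
  finally have "exp (- n * (d / \<rho> + d\<^sup>2 / (2 * \<rho>\<^sup>2))) \<le> exp (n / 2 - n * (norm z)\<^sup>2 / (2 * a\<^sup>2))"
    by simp
  hence "gauss_peak DIM('a) / a ^ DIM('a) * exp (- n * (d / \<rho> + d\<^sup>2 / (2 * \<rho>\<^sup>2)))
      \<le> gauss_peak DIM('a) / a ^ DIM('a) * exp (n / 2 - n * (norm z)\<^sup>2 / (2 * a\<^sup>2))"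
    using gauss_peak_pos[of "DIM('a)"] a by (intro mult_left_mono) auto
  thus ?thesis using gauss_kernel_optimal_radius[of x z] a unfolding n_def a_def by auto
qed

lemma gauss_kernel_le_peak_shifted:
  fixes x z :: "'a::euclidean_space"
  assumes r: "r > 0" and \<rho>: "0 < \<rho>" "\<rho> \<le> norm x" and d: "0 \<le> d" "d < \<rho>"
    and z: "norm x - d \<le> norm z"
  shows "gauss_kernel r z \<le> gauss_peak DIM('a) / norm x ^ DIM('a) * (\<rho> / (\<rho> - d)) ^ DIM('a)"
proof -
  define c where "c = gauss_peak DIM('a)"
  have c: "c > 0" unfolding c_def by (simp add: gauss_peak_pos)
  have xd: "norm x - d > 0" using \<rho> d by simp
  have z0: "z \<noteq> 0" using z xd by auto
  hence "gauss_kernel r z \<le> c / norm z ^ DIM('a)"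
    using gauss_kernel_le_peak[OF r] unfolding c_def by blast
  also have "\<dots> \<le> c / (norm x - d) ^ DIM('a)"
    using c xd z z0 by (intro divide_left_mono power_mono mult_pos_pos) auto
  also have "\<dots> = c / norm x ^ DIM('a) * (norm x / (norm x - d)) ^ DIM('a)"
    using xd \<rho> by (auto simp: power_divide)
  also have "\<dots> \<le> c / norm x ^ DIM('a) * (\<rho> / (\<rho> - d)) ^ DIM('a)"
  proof (intro mult_left_mono power_mono)
    show "norm x / (norm x - d) \<le> \<rho> / (\<rho> - d)"
      using xd \<rho> d mult_right_mono[of \<rho> "norm x" d]
      by (simp add: divide_simps mult.commute right_diff_distrib)
  qed (use c xd in auto)
  finally show ?thesis unfolding c_def .
qed

lemma continuous_on_gauss_kernel: "continuous_on UNIV (gauss_kernel r)"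
  by (cases "r = 0") (auto simp: gauss_kernel_def intro!: continuous_intros)

lemma borel_measurable_gauss_kernel[measurable]:
  "f \<in> borel_measurable M \<Longrightarrow> (\<lambda>y. gauss_kernel r (f y)) \<in> borel_measurable M"
  by (rule measurable_compose[OF _ borel_measurable_continuous_onI[OF continuous_on_gauss_kernel]])

definition gauss_shell_sum :: "nat \<Rightarrow> real" where
  "gauss_shell_sum n = (\<Sum>k. exp (- pi * (real k)\<^sup>2) * (real k + 1) ^ n)"

lemma summable_gauss_shell: "summable (\<lambda>k. exp (- pi * (real k)\<^sup>2) * (real k + 1) ^ n)"
proof (rule summable_comparison_test'[where N="n + 1"])
  show "summable (\<lambda>k. exp (-1::real) ^ k)" by (rule summable_geometric) simp
  fix k :: nat assume k: "k \<ge> n + 1"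
  have "(real k + 1) ^ n \<le> exp (real k) ^ n"
    using exp_ge_add_one_self[of "real k"] by (intro power_mono) linarith+
  also have "\<dots> = exp (real n * real k)" by (simp add: exp_of_nat_mult[symmetric])
  finally have "exp (- pi * (real k)\<^sup>2) * (real k + 1) ^ n \<le> exp (- pi * (real k)\<^sup>2) * exp (real n * real k)"
    by (simp add: mult_left_mono)
  also have "\<dots> \<le> exp (-1) ^ k"
  proof -
    have "(real n + 1) * real k \<le> real k * real k" using k by (intro mult_right_mono) auto
    also have "\<dots> \<le> pi * (real k)\<^sup>2"
      using pi_gt3 mult_right_mono[of 1 pi "real k * real k"] by (simp add: power2_eq_square)
    finally have "(real n + 1) * real k \<le> pi * (real k)\<^sup>2" .
    hence "- pi * (real k)\<^sup>2 + real n * real k \<le> - real k" by (simp add: algebra_simps)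
    thus ?thesis by (simp add: exp_add[symmetric] exp_of_nat_mult[symmetric])
  qed
  finally show "norm (exp (- pi * (real k)\<^sup>2) * (real k + 1) ^ n) \<le> exp (-1) ^ k" by simp
qed

lemma gauss_shell_sum_nonneg: "gauss_shell_sum n \<ge> 0"
  unfolding gauss_shell_sum_def by (rule suminf_nonneg[OF summable_gauss_shell]) simp

lemma gauss_kernel_le_shell_sum:
  fixes x y :: "'a::euclidean_space"
  assumes r: "r > 0"
  shows "ennreal (gauss_kernel r (x - y)) \<le> (\<Sum>k. ennreal (r powr - real DIM('a) * exp (- pi * (real k)\<^sup>2))
           * indicator (ball x ((real k + 1) * r)) y)"
proof -
  define k where "k = nat \<lfloor>dist x y / r\<rfloor>"
  have "dist x y / r \<ge> 0" using r by simp
  hence k_le: "real k \<le> dist x y / r" and k_gt: "dist x y / r < real k + 1"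
    unfolding k_def by linarith+
  have y: "y \<in> ball x ((real k + 1) * r)" using k_gt r by (simp add: divide_simps)
  have "(real k)\<^sup>2 \<le> (norm (x - y) / r)\<^sup>2" using k_le by (simp add: power_mono dist_norm)
  hence "gauss_kernel r (x - y) \<le> r powr - real DIM('a) * exp (- pi * (real k)\<^sup>2)"
    unfolding gauss_kernel_def by (intro mult_left_mono) auto
  hence "ennreal (gauss_kernel r (x - y)) \<le>
      ennreal (r powr - real DIM('a) * exp (- pi * (real k)\<^sup>2)) * indicator (ball x ((real k + 1) * r)) y"
    using y by (simp add: ennreal_leI)
  also have "\<dots> \<le> (\<Sum>k. ennreal (r powr - real DIM('a) * exp (- pi * (real k)\<^sup>2))
      * indicator (ball x ((real k + 1) * r)) y)"
    using sum_le_suminf[OF summableI, of "{k}"] by simp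
  finally show ?thesis .
qed

text \<open>Bounding \<open>G\<^sub>r(x - y)\<close> on each shell \<open>kr \<le> |x - y| < (k+1)r\<close> by its value on the
  inner sphere turns a bound \<open>\<mu>(B(x,\<rho>)) \<le> L \<rho>\<^sup>n\<close> into a bound on the Gaussian average.\<close>

lemma gauss_average_le_of_ball_growth:
  fixes \<mu> :: "'a::euclidean_space measure"
  assumes sets: "sets \<mu> = sets borel" and r: "r > 0" and L: "L \<ge> 0"
    and growth: "\<And>\<rho>. \<rho> > 0 \<Longrightarrow> emeasure \<mu> (ball x \<rho>) \<le> ennreal (L * \<rho> ^ DIM('a))"
  shows "(\<integral>\<^sup>+ y. ennreal (gauss_kernel r (x - y)) \<partial>\<mu>) \<le> ennreal (L * gauss_shell_sum DIM('a))"
proof -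
  define n where "n = DIM('a)"
  define a where "a k = ennreal (r powr - real n * exp (- pi * (real k)\<^sup>2))" for k :: nat
  have "(\<integral>\<^sup>+ y. ennreal (gauss_kernel r (x - y)) \<partial>\<mu>) \<le>
      (\<integral>\<^sup>+ y. (\<Sum>k. a k * indicator (ball x ((real k + 1) * r)) y) \<partial>\<mu>)"
    using gauss_kernel_le_shell_sum[OF r] unfolding a_def n_def by (intro nn_integral_mono) auto
  also have "\<dots> = (\<Sum>k. a k * emeasure \<mu> (ball x ((real k + 1) * r)))"
    using sets by (subst nn_integral_suminf)
      (auto simp: nn_integral_cmult_indicator measurable_cong_sets[OF sets refl]
        intro!: borel_measurable_times_ennreal borel_measurable_indicator borel_open)
  also have "\<dots> \<le> (\<Sum>k. a k * ennreal (L * ((real k + 1) * r) ^ n))"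
    by (intro suminf_le summableI mult_left_mono growth[unfolded n_def[symmetric]]) (use r in auto)
  also have "\<dots> = (\<Sum>k. ennreal (L * (exp (- pi * (real k)\<^sup>2) * (real k + 1) ^ n)))"
  proof (intro suminf_cong)
    fix k
    have "r powr - real n * r ^ n = 1" using r by (simp add: powr_minus powr_realpow divide_simps)
    moreover have "a k * ennreal (L * ((real k + 1) * r) ^ n) =
        ennreal ((r powr - real n * r ^ n) * (L * (exp (- pi * (real k)\<^sup>2) * (real k + 1) ^ n)))"
      unfolding a_def using r L by (simp add: ennreal_mult'[symmetric] power_mult_distrib mult_ac)
    ultimately show "a k * ennreal (L * ((real k + 1) * r) ^ n) =
        ennreal (L * (exp (- pi * (real k)\<^sup>2) * (real k + 1) ^ n))" by simp
  qed
  also have "\<dots> = ennreal (\<Sum>k. L * (exp (- pi * (real k)\<^sup>2) * (real k + 1) ^ n))"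
    by (rule suminf_ennreal_eq) (use L summable_gauss_shell[of n] in \<open>auto intro: summable_sums summable_mult\<close>)
  also have "\<dots> = ennreal (L * gauss_shell_sum n)"
    unfolding gauss_shell_sum_def using summable_gauss_shell by (simp add: suminf_mult)
  finally show ?thesis unfolding n_def .
qed

lemma emeasure_UN_le_of_finite_subfamilies:
  assumes C: "countable C" and A: "\<And>i. i \<in> C \<Longrightarrow> A i \<in> sets M"
    and bound: "\<And>F. finite F \<Longrightarrow> F \<subseteq> C \<Longrightarrow> emeasure M (\<Union>i\<in>F. A i) \<le> K"
  shows "emeasure M (\<Union>i\<in>C. A i) \<le> K"
proof (cases "C = {}")
  case True
  thus ?thesis using bound[of "{}"] by simp
next
  case False
  define e where "e = from_nat_into C"
  define B where "B N = (\<Union>i\<in>e ` {..<N}. A i)" for N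
  have e: "e k \<in> C" for k unfolding e_def using from_nat_into[OF False] .
  have "(\<Union>i\<in>C. A i) = (\<Union>N. B N)"
  proof -
    have "(\<Union>i\<in>C. A i) = (\<Union>k. A (e k))"
      unfolding e_def using UN_from_nat_into[OF C False, of A] by simp
    also have "\<dots> = (\<Union>N. B N)"
    proof (intro equalityI subsetI)
      fix y assume "y \<in> (\<Union>k. A (e k))"
      then obtain k where "y \<in> A (e k)" by blast
      thus "y \<in> (\<Union>N. B N)" unfolding B_def by (intro UN_I[of "Suc k"]) auto
    qed (auto simp: B_def)
    finally show ?thesis .
  qed
  moreover have "range B \<subseteq> sets M" unfolding B_def using e A by auto
  moreover have "incseq B" unfolding B_def incseq_def by (auto 4 3 intro: less_le_trans)
  ultimately have "emeasure M (\<Union>i\<in>C. A i) = (SUP N. emeasure M (B N))"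
    by (simp add: SUP_emeasure_incseq)
  also have "\<dots> \<le> K" unfolding B_def using e by (intro SUP_least bound) auto
  finally show ?thesis .
qed

lemma emeasure_UN_enlarged_balls_le:
  fixes \<mu> :: "'a::euclidean_space measure"
  assumes sets: "sets \<mu> = sets borel" and L: "L > 0" and F: "finite F"
    and large: "\<And>i. i \<in> F \<Longrightarrow> r i > 0 \<and> ennreal (L * r i ^ DIM('a)) < emeasure \<mu> (ball i (r i))"
    and disj: "pairwise (\<lambda>i j. disjnt (ball i (r i)) (ball j (r j))) F"
  shows "emeasure lborel (\<Union>i\<in>F. ball i (5 * r i)) \<le>
      ennreal (5 ^ DIM('a) * unit_ball_vol DIM('a) / L) * emeasure \<mu> UNIV"
proof -
  define K where "K = 5 ^ DIM('a) * unit_ball_vol DIM('a) / L"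
  have "emeasure lborel (\<Union>i\<in>F. ball i (5 * r i)) \<le> (\<Sum>i\<in>F. emeasure lborel (ball i (5 * r i)))"
    by (rule emeasure_subadditive_finite[OF F]) auto
  also have "\<dots> \<le> (\<Sum>i\<in>F. ennreal K * emeasure \<mu> (ball i (r i)))"
  proof (intro sum_mono)
    fix i assume i: "i \<in> F"
    have "emeasure lborel (ball i (5 * r i)) = ennreal K * ennreal (L * r i ^ DIM('a))"
      using L large[OF i] emeasure_ball[of "5 * r i" i]
      by (simp add: K_def ennreal_mult'[symmetric] power_mult_distrib field_simps)
    also have "\<dots> \<le> ennreal K * emeasure \<mu> (ball i (r i))"
      using large[OF i] by (intro mult_left_mono) auto
    finally show "emeasure lborel (ball i (5 * r i)) \<le> ennreal K * emeasure \<mu> (ball i (r i))" .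
  qed
  also have "\<dots> = ennreal K * emeasure \<mu> (\<Union>i\<in>F. ball i (r i))"
    using disj F sets
    by (simp add: sum_distrib_left[symmetric] sum_emeasure disjoint_family_on_def pairwise_def
        disjnt_def image_subset_iff)
  also have "\<dots> \<le> ennreal K * emeasure \<mu> UNIV"
    by (intro mult_left_mono emeasure_mono) (auto simp: sets)
  finally show ?thesis unfolding K_def .
qed

lemma large_ball_density_cover:
  fixes \<mu> :: "'a::euclidean_space measure"
  assumes sets: "sets \<mu> = sets borel" and fin: "emeasure \<mu> UNIV < \<infinity>" and L: "L > 0"
  obtains W where "W \<in> sets borel"
    "{x. \<exists>\<rho>>0. ennreal (L * \<rho> ^ DIM('a)) < emeasure \<mu> (ball x \<rho>)} \<subseteq> W"
    "emeasure lborel W \<le> ennreal (5 ^ DIM('a) * unit_ball_vol DIM('a) / L) * emeasure \<mu> UNIV"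
proof -
  define n where "n = DIM('a)"
  define U where "U = {x. \<exists>\<rho>>0. ennreal (L * \<rho> ^ n) < emeasure \<mu> (ball x \<rho>)}"
  define m where "m = enn2real (emeasure \<mu> UNIV)"
  have m: "emeasure \<mu> UNIV = ennreal m" unfolding m_def using fin by (simp add: ennreal_enn2real_if)
  define r where "r x = (SOME \<rho>. \<rho> > 0 \<and> ennreal (L * \<rho> ^ n) < emeasure \<mu> (ball x \<rho>))" for x
  have r: "r x > 0 \<and> ennreal (L * r x ^ n) < emeasure \<mu> (ball x (r x))" if "x \<in> U" for x
  proof -
    have "\<exists>\<rho>. \<rho> > 0 \<and> ennreal (L * \<rho> ^ n) < emeasure \<mu> (ball x \<rho>)" using that unfolding U_def by auto
    from someI_ex[OF this] show ?thesis unfolding r_def .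
  qed
  have r_bounded: "0 < r x \<and> r x \<le> max 1 (m / L)" if "x \<in> U" for x
  proof -
    have "emeasure \<mu> (ball x (r x)) \<le> emeasure \<mu> UNIV" by (rule emeasure_mono) (simp_all add: sets)
    with r[OF that] have "ennreal (L * r x ^ n) < ennreal m" unfolding m
      using less_le_trans by blast
    hence "L * r x ^ n < m" using r[OF that] L by (simp add: ennreal_less_iff)
    moreover have "r x \<le> r x ^ n" if "r x > 1" using that unfolding n_def by (intro self_le_power) auto
    ultimately have "r x \<le> 1 \<or> L * r x \<le> m" using L r[OF that] by (smt (verit) mult_left_mono)
    thus ?thesis using r[OF that] L by (auto simp: le_max_iff_disj pos_le_divide_eq mult.commute)
  qed
  have "U \<subseteq> (\<Union>i\<in>U. ball i (r i))" using r_bounded by force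
  then obtain C where C: "countable C" "C \<subseteq> U"
     "pairwise (\<lambda>i j. disjnt (ball i (r i)) (ball j (r j))) C"
     "U \<subseteq> (\<Union>i\<in>C. ball i (5 * r i))"
    using Vitali_covering_lemma_balls[where S=U and K=U and a="\<lambda>i. i" and r=r, OF _ r_bounded] by blast
  show ?thesis
  proof (rule that)
    show "(\<Union>i\<in>C. ball i (5 * r i)) \<in> sets borel" by (intro borel_open) auto
    show "{x. \<exists>\<rho>>0. ennreal (L * \<rho> ^ DIM('a)) < emeasure \<mu> (ball x \<rho>)} \<subseteq> (\<Union>i\<in>C. ball i (5 * r i))"
      using C(4) unfolding U_def n_def by auto
    show "emeasure lborel (\<Union>i\<in>C. ball i (5 * r i)) \<le>
        ennreal (5 ^ DIM('a) * unit_ball_vol DIM('a) / L) * emeasure \<mu> UNIV"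
    proof (rule emeasure_UN_le_of_finite_subfamilies[OF C(1)])
      fix F assume "finite F" "F \<subseteq> C"
      thus "emeasure lborel (\<Union>i\<in>F. ball i (5 * r i)) \<le>
          ennreal (5 ^ DIM('a) * unit_ball_vol DIM('a) / L) * emeasure \<mu> UNIV"
        using r C(2,3) unfolding n_def
        by (intro emeasure_UN_enlarged_balls_le[OF sets L]) (auto intro: pairwise_subset)
    qed auto
  qed
qed

definition gauss_weak_const :: "nat \<Rightarrow> real" where
  "gauss_weak_const n = 5 ^ n * unit_ball_vol n * (gauss_shell_sum n + 1)"

lemma gauss_weak_const_pos: "gauss_weak_const n > 0"
  unfolding gauss_weak_const_def using gauss_shell_sum_nonneg[of n] by (intro mult_pos_pos) auto

lemma gauss_average_weak_type:
  fixes \<mu> :: "'a::euclidean_space measure"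
  assumes sets: "sets \<mu> = sets borel" and fin: "emeasure \<mu> UNIV < \<infinity>" and s: "s > 0"
  obtains W where "W \<in> sets borel"
    "{x. \<exists>r>0. ennreal s < (\<integral>\<^sup>+ y. ennreal (gauss_kernel r (x - y)) \<partial>\<mu>)} \<subseteq> W"
    "emeasure lborel W \<le> ennreal (gauss_weak_const DIM('a) / s) * emeasure \<mu> UNIV"
proof -
  define g where "g = gauss_shell_sum DIM('a)"
  have g: "g \<ge> 0" unfolding g_def by (rule gauss_shell_sum_nonneg)
  define L where "L = s / (g + 1)"
  have L: "L > 0" unfolding L_def using s g by simp
  obtain W where W: "W \<in> sets borel"
    "{x. \<exists>\<rho>>0. ennreal (L * \<rho> ^ DIM('a)) < emeasure \<mu> (ball x \<rho>)} \<subseteq> W"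
    "emeasure lborel W \<le> ennreal (5 ^ DIM('a) * unit_ball_vol DIM('a) / L) * emeasure \<mu> UNIV"
    by (rule large_ball_density_cover[OF sets fin L])
  show ?thesis
  proof (rule that[OF W(1)])
    show "{x. \<exists>r>0. ennreal s < (\<integral>\<^sup>+ y. ennreal (gauss_kernel r (x - y)) \<partial>\<mu>)} \<subseteq> W"
    proof (rule subsetI, rule ccontr)
      fix x assume "x \<in> {x. \<exists>r>0. ennreal s < (\<integral>\<^sup>+ y. ennreal (gauss_kernel r (x - y)) \<partial>\<mu>)}" "x \<notin> W"
      then obtain r where r: "r > 0" and large: "ennreal s < (\<integral>\<^sup>+ y. ennreal (gauss_kernel r (x - y)) \<partial>\<mu>)"
        by blast
      have growth: "emeasure \<mu> (ball x \<rho>) \<le> ennreal (L * \<rho> ^ DIM('a))" if "\<rho> > 0" for \<rho>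
      proof (rule ccontr)
        assume "\<not> ?thesis"
        hence "x \<in> {x. \<exists>\<rho>>0. ennreal (L * \<rho> ^ DIM('a)) < emeasure \<mu> (ball x \<rho>)}"
          using that by (auto simp: not_le)
        thus False using W(2) \<open>x \<notin> W\<close> by blast
      qed
      have "(\<integral>\<^sup>+ y. ennreal (gauss_kernel r (x - y)) \<partial>\<mu>) \<le> ennreal (L * g)"
        unfolding g_def using L by (intro gauss_average_le_of_ball_growth[OF sets r _ growth]) auto
      also have "\<dots> \<le> ennreal s"
        unfolding L_def using s g by (intro ennreal_leI) (simp add: field_simps)
      finally show False using large by simp
    qed
    have "5 ^ DIM('a) * unit_ball_vol DIM('a) / L = gauss_weak_const DIM('a) / s"
      unfolding L_def g_def gauss_weak_const_def using s g by (simp add: field_simps)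
    thus "emeasure lborel W \<le> ennreal (gauss_weak_const DIM('a) / s) * emeasure \<mu> UNIV"
      using W(3) by simp
  qed
qed

lemma sets_dilate_measure [simp]: "sets (dilate_measure t V) = sets borel"
  by (simp add: dilate_measure_def)

lemma emeasure_dilate_measure_UNIV:
  assumes "sets V = sets borel"
  shows "emeasure (dilate_measure t V) UNIV = emeasure V UNIV"
  using assms sets_eq_imp_space_eq[OF assms]
  by (simp add: dilate_measure_def emeasure_distr measurable_cong_sets[OF assms refl])

lemma nn_integral_dilate_measure:
  assumes sets: "sets V = sets borel" and f: "f \<in> borel_measurable borel"
  shows "(\<integral>\<^sup>+ z. f z \<partial>dilate_measure t V) = (\<integral>\<^sup>+ y. f (t *\<^sub>R y) \<partial>V)"
  unfolding dilate_measure_def using f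
  by (intro nn_integral_distr) (auto simp: measurable_cong_sets[OF sets refl])

lemma nn_integral_dilate_restricted:
  assumes sets: "sets V = sets borel" and A: "A \<in> sets borel" and f: "f \<in> borel_measurable borel"
  shows "(\<integral>\<^sup>+ z. f z \<partial>dilate_measure t (density V (indicator A))) =
    (\<integral>\<^sup>+ y. indicator A y * f (t *\<^sub>R y) \<partial>V)"
  using sets A f
  by (simp add: nn_integral_dilate_measure nn_integral_density measurable_cong_sets[OF sets refl])

lemma nn_integral_dilate_measure_split:
  assumes sets: "sets V = sets borel" and B: "B \<in> sets borel" and f: "f \<in> borel_measurable borel"
  shows "(\<integral>\<^sup>+ z. f z \<partial>dilate_measure t V) =
    (\<integral>\<^sup>+ y. indicator B y * f (t *\<^sub>R y) \<partial>V) + (\<integral>\<^sup>+ z. f z \<partial>dilate_measure t (density V (indicator (- B))))"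
proof -
  have "(\<integral>\<^sup>+ z. f z \<partial>dilate_measure t V) =
      (\<integral>\<^sup>+ y. indicator B y * f (t *\<^sub>R y) + indicator (- B) y * f (t *\<^sub>R y) \<partial>V)"
    using sets f by (simp add: nn_integral_dilate_measure) (intro nn_integral_cong, simp split: split_indicator)
  also have "\<dots> = (\<integral>\<^sup>+ y. indicator B y * f (t *\<^sub>R y) \<partial>V) + (\<integral>\<^sup>+ y. indicator (- B) y * f (t *\<^sub>R y) \<partial>V)"
    using B f by (intro nn_integral_add) (auto simp: measurable_cong_sets[OF sets refl])
  finally show ?thesis using nn_integral_dilate_restricted[OF sets _ f] B by simp
qed

lemma gauss_max_dilate_le:
  fixes V :: "'a::euclidean_space measure"
  assumes sets: "sets V = sets borel" and fin: "finite_measure V" and B: "B \<in> sets borel"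
    and near: "\<And>y. y \<in> B \<Longrightarrow> norm (t *\<^sub>R y) \<le> d" and d: "0 \<le> d" "d < \<rho>" and x: "0 < \<rho>" "\<rho> \<le> norm x"
    and far: "\<And>r. r > 0 \<Longrightarrow>
      (\<integral>\<^sup>+ z. ennreal (gauss_kernel r (x - z)) \<partial>dilate_measure t (density V (indicator (- B)))) \<le> ennreal b"
    and b: "b \<ge> 0"
  shows "gauss_max (dilate_measure t V) x \<le>
    ennreal (gauss_peak DIM('a) / norm x ^ DIM('a) * (\<rho> / (\<rho> - d)) ^ DIM('a) * measure V B + b)"
  unfolding gauss_max_def
proof (rule SUP_least)
  interpret finite_measure V by (rule fin)
  define Q where "Q = gauss_peak DIM('a) / norm x ^ DIM('a) * (\<rho> / (\<rho> - d)) ^ DIM('a)"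
  have Q: "Q \<ge> 0" unfolding Q_def using x d by (simp add: gauss_peak_pos less_imp_le)
  fix r :: real assume "r \<in> {0<..}"
  hence r: "r > 0" by simp
  have "(\<integral>\<^sup>+ y. indicator B y * ennreal (gauss_kernel r (x - t *\<^sub>R y)) \<partial>V) \<le>
      (\<integral>\<^sup>+ y. ennreal Q * indicator B y \<partial>V)"
  proof (rule nn_integral_mono)
    fix y
    have "gauss_kernel r (x - t *\<^sub>R y) \<le> Q" if "y \<in> B"
    proof -
      have "norm x - d \<le> norm (x - t *\<^sub>R y)"
        using near[OF that] norm_triangle_ineq2[of x "t *\<^sub>R y"] by linarith
      thus ?thesis unfolding Q_def by (rule gauss_kernel_le_peak_shifted[OF r x d])
    qed
    thus "indicator B y * ennreal (gauss_kernel r (x - t *\<^sub>R y)) \<le> ennreal Q * indicator B y"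
      by (auto intro: ennreal_leI split: split_indicator)
  qed
  also have "\<dots> = ennreal (Q * measure V B)"
    using B sets Q by (simp add: nn_integral_cmult_indicator emeasure_eq_measure ennreal_mult)
  finally have "(\<integral>\<^sup>+ z. ennreal (gauss_kernel r (x - z)) \<partial>dilate_measure t V) \<le> ennreal (Q * measure V B) + ennreal b"
    using nn_integral_dilate_measure_split[OF sets B, of "\<lambda>z. ennreal (gauss_kernel r (x - z))"] far[OF r]
    by (simp add: add_mono)
  also have "\<dots> = ennreal (Q * measure V B + b)" using Q b by (simp add: ennreal_plus)
  finally show "(\<integral>\<^sup>+ z. ennreal (gauss_kernel r (x - z)) \<partial>dilate_measure t V) \<le>
      ennreal (gauss_peak DIM('a) / norm x ^ DIM('a) * (\<rho> / (\<rho> - d)) ^ DIM('a) * measure V B + b)"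
    unfolding Q_def .
qed

lemma gauss_max_dilate_ge:
  fixes V :: "'a::euclidean_space measure"
  assumes sets: "sets V = sets borel" and fin: "finite_measure V" and B: "B \<in> sets borel"
    and near: "\<And>y. y \<in> B \<Longrightarrow> norm (t *\<^sub>R y) \<le> d" and d: "0 \<le> d" and x: "0 < \<rho>" "\<rho> \<le> norm x"
  shows "ennreal (gauss_peak DIM('a) / norm x ^ DIM('a) * exp (- DIM('a) * (d / \<rho> + d\<^sup>2 / (2 * \<rho>\<^sup>2)))
      * measure V B) \<le> gauss_max (dilate_measure t V) x"
proof -
  interpret finite_measure V by (rule fin)
  define r where "r = norm x * sqrt (2 * pi / DIM('a))"
  define P where "P = gauss_peak DIM('a) / norm x ^ DIM('a) * exp (- DIM('a) * (d / \<rho> + d\<^sup>2 / (2 * \<rho>\<^sup>2)))"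
  have r: "r > 0" unfolding r_def using x by (intro mult_pos_pos) auto
  have P: "P \<ge> 0" unfolding P_def using x by (simp add: gauss_peak_pos less_imp_le)
  have "ennreal (P * measure V B) = (\<integral>\<^sup>+ y. ennreal P * indicator B y \<partial>V)"
    using B sets P by (simp add: nn_integral_cmult_indicator emeasure_eq_measure ennreal_mult)
  also have "\<dots> \<le> (\<integral>\<^sup>+ y. indicator B y * ennreal (gauss_kernel r (x - t *\<^sub>R y)) \<partial>V)"
  proof (rule nn_integral_mono)
    fix y
    have "P \<le> gauss_kernel r (x - t *\<^sub>R y)" if "y \<in> B"
    proof -
      have "norm (x - t *\<^sub>R y) \<le> norm x + d"
        using near[OF that] norm_triangle_ineq4[of x "t *\<^sub>R y"] by linarith
      thus ?thesis unfolding P_def r_def by (rule gauss_kernel_optimal_radius_ge[OF x d])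
    qed
    thus "ennreal P * indicator B y \<le> indicator B y * ennreal (gauss_kernel r (x - t *\<^sub>R y))"
      by (auto intro: ennreal_leI split: split_indicator)
  qed
  also have "\<dots> \<le> (\<integral>\<^sup>+ z. ennreal (gauss_kernel r (x - z)) \<partial>dilate_measure t V)"
    using nn_integral_dilate_measure_split[OF sets B, of "\<lambda>z. ennreal (gauss_kernel r (x - z))"] by simp
  also have "\<dots> \<le> gauss_max (dilate_measure t V) x"
    unfolding gauss_max_def using r by (intro SUP_upper) simp
  finally show ?thesis unfolding P_def .
qed

lemma deviation_le_of_bounds:
  fixes P m mB A E \<epsilon> \<eta> s \<phi> :: real
  assumes "0 \<le> P" "0 \<le> \<epsilon>" "\<epsilon> \<le> 1" "0 \<le> \<eta>" "0 \<le> mB" "m - \<eta> \<le> mB" "mB \<le> m"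
    and "0 \<le> A" "A \<le> 1 + \<epsilon>" "1 - \<epsilon> \<le> E"
    and upper: "\<phi> \<le> P * A * mB + s / 2" and lower: "P * E * mB \<le> \<phi>"
    and small: "P * (m * \<epsilon> + \<eta>) \<le> s / 2"
  shows "\<bar>\<phi> - P * m\<bar> \<le> s"
proof -
  have "A * mB \<le> (1 + \<epsilon>) * m" using assms by (intro mult_mono) auto
  hence "P * A * mB \<le> P * m + P * (m * \<epsilon>)" using assms mult_left_mono by (fastforce simp: algebra_simps)
  moreover have "P * (m * \<epsilon>) \<le> P * (m * \<epsilon> + \<eta>)" using assms by (intro mult_left_mono) auto
  moreover have "m - (m * \<epsilon> + \<eta>) \<le> E * mB"
  proof -
    have "m - (m * \<epsilon> + \<eta>) \<le> (1 - \<epsilon>) * (m - \<eta>)" using assms by (simp add: algebra_simps)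
    also have "\<dots> \<le> (1 - \<epsilon>) * mB" using assms by (intro mult_left_mono) auto
    also have "\<dots> \<le> E * mB" using assms by (intro mult_right_mono) auto
    finally show ?thesis .
  qed
  hence "P * m - P * (m * \<epsilon> + \<eta>) \<le> P * E * mB"
    using mult_left_mono[OF _ \<open>0 \<le> P\<close>] by (fastforce simp: algebra_simps)
  ultimately show ?thesis using upper lower small by linarith
qed

lemma gauss_max_dilate_deviation_le:
  fixes V :: "'a::euclidean_space measure"
  assumes sets: "sets V = sets borel" and fin: "finite_measure V" and s: "s > 0" and \<eta>: "\<eta> \<ge> 0"
    and \<epsilon>: "0 \<le> \<epsilon>" "\<epsilon> \<le> 1" and tail: "measure V (- cball 0 R) \<le> \<eta>"
    and t: "0 \<le> t" "0 \<le> R" "t * R < \<rho>" and x: "0 < \<rho>" "\<rho> \<le> norm x"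
    and up: "(\<rho> / (\<rho> - t * R)) ^ DIM('a) \<le> 1 + \<epsilon>"
    and lo: "1 - \<epsilon> \<le> exp (- DIM('a) * (t * R / \<rho> + (t * R)\<^sup>2 / (2 * \<rho>\<^sup>2)))"
    and far: "\<And>r. r > 0 \<Longrightarrow> (\<integral>\<^sup>+ z. ennreal (gauss_kernel r (x - z))
      \<partial>dilate_measure t (density V (indicator (- cball 0 R)))) \<le> ennreal (s / 2)"
    and large: "2 * gauss_peak DIM('a) * (measure V (space V) * \<epsilon> + \<eta>) / s \<le> norm x ^ DIM('a)"
  shows "\<bar>enn2ereal (gauss_max (dilate_measure t V) x)
      - ereal (gauss_peak DIM('a) * measure V (space V) / norm x ^ DIM('a))\<bar> \<le> ereal s"
proof -
  interpret finite_measure V by (rule fin)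
  define B :: "'a set" where "B = cball 0 R"
  define m where "m = measure V (space V)"
  define P where "P = gauss_peak DIM('a) / norm x ^ DIM('a)"
  have x0: "norm x > 0" using x by linarith
  hence P: "P > 0" unfolding P_def by (simp add: gauss_peak_pos)
  have B: "B \<in> sets borel" unfolding B_def by simp
  have near: "norm (t *\<^sub>R y) \<le> t * R" if "y \<in> B" for y
    using that t unfolding B_def by (simp add: mult_left_mono)
  have mB: "m - \<eta> \<le> measure V B" "measure V B \<le> m"
    using tail finite_measure_compl[of B] sets_eq_imp_space_eq[OF sets] B sets bounded_measure[of B]
    unfolding m_def B_def by (auto simp: Compl_eq_Diff_UNIV)
  define A where "A = (\<rho> / (\<rho> - t * R)) ^ DIM('a)"
  define E where "E = exp (- DIM('a) * (t * R / \<rho> + (t * R)\<^sup>2 / (2 * \<rho>\<^sup>2)))"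
  have A: "0 \<le> A" unfolding A_def using t x by simp
  have upper: "gauss_max (dilate_measure t V) x \<le> ennreal (P * A * measure V B + s / 2)"
    unfolding P_def A_def using t s by (intro gauss_max_dilate_le[OF sets fin B near _ _ x far[unfolded B_def[symmetric]]])
      (auto simp: mult_nonneg_nonneg)
  have lower: "ennreal (P * E * measure V B) \<le> gauss_max (dilate_measure t V) x"
    unfolding P_def E_def using t by (intro gauss_max_dilate_ge[OF sets fin B near _ x]) auto
  obtain \<phi> where \<phi>: "gauss_max (dilate_measure t V) x = ennreal \<phi>" "0 \<le> \<phi>"
    using upper by (cases "gauss_max (dilate_measure t V) x") (auto simp: top_unique)
  have "\<bar>\<phi> - P * m\<bar> \<le> s"
  proof (rule deviation_le_of_bounds[OF _ \<epsilon> \<eta> _ mB A])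
    show "A \<le> 1 + \<epsilon>" "1 - \<epsilon> \<le> E" unfolding A_def E_def using up lo by simp_all
    have "0 \<le> P * A * measure V B + s / 2" using P A s by simp
    with upper \<phi>(1) show "\<phi> \<le> P * A * measure V B + s / 2" by (metis ennreal_le_iff)
    show "P * E * measure V B \<le> \<phi>" using lower \<phi> by (simp add: ennreal_le_iff)
    show "P * (m * \<epsilon> + \<eta>) \<le> s / 2"
      using large s x0 unfolding P_def m_def by (simp add: field_simps)
  qed (use P in auto)
  thus ?thesis using \<phi> unfolding P_def m_def by simp
qed

lemma emeasure_gauss_max_deviation_le:
  fixes V :: "'a::euclidean_space measure"
  assumes sets: "sets V = sets borel" and fin: "finite_measure V" and s: "s > 0" and \<eta>: "\<eta> > 0"
    and \<epsilon>: "0 \<le> \<epsilon>" "\<epsilon> \<le> 1" and tail: "emeasure V (- cball 0 R) \<le> ennreal \<eta>"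
    and t: "0 \<le> t" "0 \<le> R" "t * R < \<rho>" and \<rho>: "0 < \<rho>"
    and up: "(\<rho> / (\<rho> - t * R)) ^ DIM('a) \<le> 1 + \<epsilon>"
    and lo: "1 - \<epsilon> \<le> exp (- DIM('a) * (t * R / \<rho> + (t * R)\<^sup>2 / (2 * \<rho>\<^sup>2)))"
  shows "ennreal s * emeasure lebesgue {x \<in> - ball 0 \<rho>. ereal s < \<bar>enn2ereal (gauss_max (dilate_measure t V) x)
      - ereal (gauss_peak DIM('a) * measure V (space V) / norm x ^ DIM('a))\<bar>}
    \<le> ennreal (2 * unit_ball_vol DIM('a) * gauss_peak DIM('a) * (measure V (space V) * \<epsilon> + \<eta>)
      + 2 * gauss_weak_const DIM('a) * \<eta>)"
    (is "ennreal s * emeasure lebesgue ?S \<le> _")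
proof -
  interpret finite_measure V by (rule fin)
  define n where "n = DIM('a)"
  define \<omega> where "\<omega> = unit_ball_vol n"
  define C where "C = gauss_weak_const n"
  define K where "K = gauss_peak n * (measure V (space V) * \<epsilon> + \<eta>)"
  define \<rho>' where "\<rho>' = root n (2 * K / s)"
  define \<mu> where "\<mu> = dilate_measure t (density V (indicator (- cball (0::'a) R)))"
  have K: "K > 0" unfolding K_def n_def using \<epsilon> \<eta> by (simp add: gauss_peak_pos add_nonneg_pos)
  have \<rho>': "0 \<le> \<rho>'" "\<rho>' ^ n = 2 * K / s" unfolding \<rho>'_def n_def using K s by simp_all
  have \<mu>_UNIV: "emeasure \<mu> UNIV \<le> ennreal \<eta>"
    using tail sets sets_eq_imp_space_eq[OF sets]
    by (simp add: \<mu>_def emeasure_dilate_measure_UNIV emeasure_restricted)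
  obtain W where W: "W \<in> sets borel"
    "{x. \<exists>r>0. ennreal (s / 2) < (\<integral>\<^sup>+ y. ennreal (gauss_kernel r (x - y)) \<partial>\<mu>)} \<subseteq> W"
    "emeasure lborel W \<le> ennreal (C / (s / 2)) * emeasure \<mu> UNIV"
    using gauss_average_weak_type[of \<mu> "s / 2"] \<mu>_UNIV s unfolding C_def n_def
    by (auto simp: \<mu>_def top_unique le_less_trans)
  have "?S \<subseteq> ball 0 \<rho>' \<union> W"
  proof (rule subsetI, rule ccontr)
    fix x assume "x \<in> ?S" "x \<notin> ball 0 \<rho>' \<union> W"
    hence x: "\<rho> \<le> norm x" "\<rho>' \<le> norm x" "x \<notin> W"
      and dev: "ereal s < \<bar>enn2ereal (gauss_max (dilate_measure t V) x)
        - ereal (gauss_peak DIM('a) * measure V (space V) / norm x ^ DIM('a))\<bar>" by auto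
    have far: "(\<integral>\<^sup>+ z. ennreal (gauss_kernel r (x - z)) \<partial>\<mu>) \<le> ennreal (s / 2)" if "r > 0" for r
    proof (rule ccontr)
      assume "\<not> ?thesis"
      hence "ennreal (s / 2) < (\<integral>\<^sup>+ z. ennreal (gauss_kernel r (x - z)) \<partial>\<mu>)" by (simp only: not_le)
      with that have "x \<in> {x. \<exists>r>0. ennreal (s / 2) < (\<integral>\<^sup>+ y. ennreal (gauss_kernel r (x - y)) \<partial>\<mu>)}"
        by blast
      thus False using W(2) x(3) by blast
    qed
    have "\<bar>enn2ereal (gauss_max (dilate_measure t V) x)
        - ereal (gauss_peak DIM('a) * measure V (space V) / norm x ^ DIM('a))\<bar> \<le> ereal s"
    proof (rule gauss_max_dilate_deviation_le[OF sets fin s _ \<epsilon> _ t \<rho> x(1) up lo])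
      show "measure V (- cball 0 R) \<le> \<eta>" using tail \<eta> by (simp add: emeasure_eq_measure)
      show "(\<integral>\<^sup>+ z. ennreal (gauss_kernel r (x - z)) \<partial>dilate_measure t (density V (indicator (- cball 0 R))))
          \<le> ennreal (s / 2)" if "r > 0" for r
        using far[OF that] unfolding \<mu>_def .
      show "2 * gauss_peak DIM('a) * (measure V (space V) * \<epsilon> + \<eta>) / s \<le> norm x ^ DIM('a)"
        using power_mono[OF x(2) \<rho>'(1), of n] \<rho>'(2) unfolding K_def n_def by simp
    qed (use \<eta> in simp)
    thus False using dev by simp
  qed
  hence "emeasure lebesgue ?S \<le> emeasure lebesgue (ball 0 \<rho>' \<union> W)"
    by (rule emeasure_mono) (use W(1) in simp)
  also have "\<dots> = emeasure lborel (ball 0 \<rho>' \<union> W)" using W(1) by simp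
  also have "\<dots> \<le> emeasure lborel (ball (0::'a) \<rho>') + emeasure lborel W"
    using W(1) by (intro emeasure_subadditive) auto
  also have "\<dots> \<le> ennreal (\<omega> * (2 * K / s)) + ennreal (C / (s / 2)) * ennreal \<eta>"
  proof (rule add_mono)
    show "emeasure lborel (ball (0::'a) \<rho>') \<le> ennreal (\<omega> * (2 * K / s))"
      using emeasure_ball[OF \<rho>'(1), of "0::'a"] \<rho>'(2) unfolding \<omega>_def n_def by simp
    show "emeasure lborel W \<le> ennreal (C / (s / 2)) * ennreal \<eta>"
      using order_trans[OF W(3) mult_left_mono[OF \<mu>_UNIV]] by simp
  qed
  also have "\<dots> = ennreal (\<omega> * (2 * K / s) + C / (s / 2) * \<eta>)"
    using K s \<eta> gauss_weak_const_pos[of n] unfolding \<omega>_def C_def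
    by (simp add: ennreal_mult'[symmetric] ennreal_plus)
  finally have "ennreal s * emeasure lebesgue ?S \<le> ennreal s * ennreal (\<omega> * (2 * K / s) + C / (s / 2) * \<eta>)"
    by (rule mult_left_mono) simp
  also have "\<dots> = ennreal (s * (\<omega> * (2 * K / s) + C / (s / 2) * \<eta>))"
    by (rule ennreal_mult'[symmetric]) (use s in simp)
  also have "s * (\<omega> * (2 * K / s) + C / (s / 2) * \<eta>) = 2 * unit_ball_vol DIM('a) * gauss_peak DIM('a)
      * (measure V (space V) * \<epsilon> + \<eta>) + 2 * gauss_weak_const DIM('a) * \<eta>"
    using s unfolding \<omega>_def C_def K_def n_def by (simp add: field_simps)
  finally show ?thesis .
qed

lemma weak_L1_norm_gauss_max_deviation_le:
  fixes V :: "'a::euclidean_space measure"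
  assumes sets: "sets V = sets borel" and fin: "finite_measure V" and \<delta>: "0 < \<delta>" "\<delta> \<le> 1"
    and tail: "emeasure V (- cball 0 R) \<le> ennreal \<delta>"
    and t: "0 \<le> t" "0 \<le> R" "t * R < \<rho>" and \<rho>: "0 < \<rho>"
    and up: "(\<rho> / (\<rho> - t * R)) ^ DIM('a) \<le> 1 + \<delta>"
    and lo: "1 - \<delta> \<le> exp (- DIM('a) * (t * R / \<rho> + (t * R)\<^sup>2 / (2 * \<rho>\<^sup>2)))"
  shows "weak_L1_norm (- ball 0 \<rho>) (\<lambda>x. enn2ereal (gauss_max (dilate_measure t V) x)
      - ereal (gauss_peak DIM('a) * measure V (space V) / norm x ^ DIM('a)))
    \<le> ennreal (\<delta> * (2 * unit_ball_vol DIM('a) * gauss_peak DIM('a) * (measure V (space V) + 1)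
      + 2 * gauss_weak_const DIM('a)))"
  unfolding weak_L1_norm_def
proof (rule SUP_least)
  fix s :: real assume "s \<in> {0<..}"
  hence "ennreal s * emeasure lebesgue {x \<in> - ball 0 \<rho>. ereal s < \<bar>enn2ereal (gauss_max (dilate_measure t V) x)
      - ereal (gauss_peak DIM('a) * measure V (space V) / norm x ^ DIM('a))\<bar>}
    \<le> ennreal (2 * unit_ball_vol DIM('a) * gauss_peak DIM('a) * (measure V (space V) * \<delta> + \<delta>)
      + 2 * gauss_weak_const DIM('a) * \<delta>)"
    using \<delta> by (intro emeasure_gauss_max_deviation_le[OF sets fin _ _ _ _ tail t \<rho> up lo]) auto
  also have "\<dots> = ennreal (\<delta> * (2 * unit_ball_vol DIM('a) * gauss_peak DIM('a) * (measure V (space V) + 1)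
      + 2 * gauss_weak_const DIM('a)))"
    by (simp add: algebra_simps)
  finally show "ennreal s * emeasure lebesgue {x \<in> - ball 0 \<rho>. ereal s < \<bar>enn2ereal (gauss_max (dilate_measure t V) x)
      - ereal (gauss_peak DIM('a) * measure V (space V) / norm x ^ DIM('a))\<bar>} \<le> \<dots>" .
qed

lemma finite_measure_tail_le:
  fixes V :: "'a::euclidean_space measure"
  assumes sets: "sets V = sets borel" and fin: "finite_measure V" and \<eta>: "\<eta> > 0"
  obtains R where "R > 0" "emeasure V (- cball 0 R) \<le> ennreal \<eta>"
proof -
  interpret finite_measure V by (rule fin)
  have "(\<lambda>k. measure V (- cball (0::'a) (real k))) \<longlonglongrightarrow> measure V (\<Inter>k. - cball 0 (real k))"
  proof (rule finite_Lim_measure_decseq)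
    show "range (\<lambda>k. - cball (0::'a) (real k)) \<subseteq> sets V" unfolding sets by auto
    show "decseq (\<lambda>k. - cball (0::'a) (real k))" by (rule decseq_SucI) auto
  qed
  moreover have "(\<Inter>k. - cball (0::'a) (real k)) = {}"
  proof (intro equalityI subsetI)
    fix y :: 'a assume "y \<in> (\<Inter>k. - cball 0 (real k))"
    moreover obtain k :: nat where "norm y \<le> real k" using real_arch_simple by blast
    ultimately show "y \<in> {}" by auto
  qed simp
  ultimately have "(\<lambda>k. measure V (- cball (0::'a) (real k))) \<longlonglongrightarrow> 0" by simp
  from order_tendstoD(2)[OF this \<eta>] obtain N where "\<forall>k\<ge>N. measure V (- cball (0::'a) (real k)) < \<eta>"
    by (auto simp: eventually_sequentially)
  hence "measure V (- cball (0::'a) (real (Suc N))) < \<eta>" by (meson le_Suc_eq order_refl)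
  hence "emeasure V (- cball (0::'a) (real (Suc N))) \<le> ennreal \<eta>"
    by (simp add: emeasure_eq_measure ennreal_leI less_imp_le)
  thus ?thesis by (rule that[rotated]) simp
qed

lemma eventually_dilation_factors:
  fixes \<rho> \<epsilon> R :: real
  assumes \<rho>: "0 < \<rho>" and \<epsilon>: "0 < \<epsilon>"
  shows "\<forall>\<^sub>F t in at_right 0. 0 < t \<and> t * R < \<rho> \<and> (\<rho> / (\<rho> - t * R)) ^ n \<le> 1 + \<epsilon>
    \<and> 1 - \<epsilon> \<le> exp (- real n * (t * R / \<rho> + (t * R)\<^sup>2 / (2 * \<rho>\<^sup>2)))"
proof (intro eventually_conj)
  show "\<forall>\<^sub>F t in at_right 0. (0::real) < t" by (rule eventually_at_right_less)
  have "((\<lambda>t. t * R) \<longlongrightarrow> 0 * R) (at_right 0)" by (intro tendsto_intros)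
  thus "\<forall>\<^sub>F t in at_right 0. t * R < \<rho>" using order_tendstoD(2) \<rho> by fastforce
  have "((\<lambda>t. (\<rho> / (\<rho> - t * R)) ^ n) \<longlongrightarrow> (\<rho> / (\<rho> - 0 * R)) ^ n) (at_right 0)"
    using \<rho> by (intro tendsto_intros) auto
  hence "\<forall>\<^sub>F t in at_right 0. (\<rho> / (\<rho> - t * R)) ^ n < 1 + \<epsilon>"
    using \<rho> \<epsilon> by (intro order_tendstoD(2)) auto
  thus "\<forall>\<^sub>F t in at_right 0. (\<rho> / (\<rho> - t * R)) ^ n \<le> 1 + \<epsilon>" by (rule eventually_mono) simp
  have "((\<lambda>t. exp (- real n * (t * R / \<rho> + (t * R)\<^sup>2 / (2 * \<rho>\<^sup>2)))) \<longlongrightarrow>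
      exp (- real n * (0 * R / \<rho> + (0 * R)\<^sup>2 / (2 * \<rho>\<^sup>2)))) (at_right 0)"
    using \<rho> by (intro tendsto_intros) auto
  hence "\<forall>\<^sub>F t in at_right 0. 1 - \<epsilon> < exp (- real n * (t * R / \<rho> + (t * R)\<^sup>2 / (2 * \<rho>\<^sup>2)))"
    using \<epsilon> by (intro order_tendstoD(1)) auto
  thus "\<forall>\<^sub>F t in at_right 0. 1 - \<epsilon> \<le> exp (- real n * (t * R / \<rho> + (t * R)\<^sup>2 / (2 * \<rho>\<^sup>2)))"
    by (rule eventually_mono) simp
qed

lemma tendsto_zero_ennrealI:
  fixes g :: "'b \<Rightarrow> ennreal"
  assumes "\<And>\<epsilon>. \<epsilon> > 0 \<Longrightarrow> \<forall>\<^sub>F t in F. g t \<le> ennreal \<epsilon>"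
  shows "(g \<longlongrightarrow> 0) F"
proof (rule order_tendstoI)
  fix a :: ennreal assume "0 < a"
  then obtain b where b: "0 < b" "b < a" using dense by blast
  hence "b \<noteq> top" by (auto simp: top_unique)
  then obtain \<epsilon> where "0 < \<epsilon>" "ennreal \<epsilon> < a" using b by (cases b) auto
  thus "\<forall>\<^sub>F t in F. g t < a" using assms[of \<epsilon>] by (auto elim: eventually_mono)
qed simp

theorem corollary2p6:
  fixes V :: "'a::euclidean_space measure" and \<rho> :: real
  assumes "sets V = sets borel"
    and "finite_measure V"
    and "absolutely_continuous lborel V"
    and "\<rho> > 0"
  shows "((\<lambda>t. weak_L1_norm (- ball 0 \<rho>)
            (\<lambda>x. enn2ereal (gauss_max (dilate_measure t V) x)
                 - ereal ((real DIM('a) / (2 * pi * exp 1)) powr (real DIM('a) / 2)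
                          * measure V (space V) / norm x ^ DIM('a))))
          \<longlongrightarrow> 0) (at_right 0)"
  unfolding gauss_peak_def[symmetric]
proof (rule tendsto_zero_ennrealI)
  note sets = assms(1) and fin = assms(2) and \<rho> = assms(4)
  define Z where "Z = 2 * unit_ball_vol DIM('a) * gauss_peak DIM('a) * (measure V (space V) + 1)
    + 2 * gauss_weak_const DIM('a)"
  have Z: "Z \<ge> 0" unfolding Z_def by (simp add: gauss_peak_pos less_imp_le gauss_weak_const_pos)
  fix \<epsilon> :: real assume \<epsilon>: "\<epsilon> > 0"
  define \<delta> where "\<delta> = min 1 (\<epsilon> / (Z + 1))"
  have \<delta>: "0 < \<delta>" "\<delta> \<le> 1" "\<delta> * Z \<le> \<epsilon>"
    using \<epsilon> Z by (auto simp: \<delta>_def min_def field_simps)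
  obtain R where R: "R > 0" "emeasure V (- cball 0 R) \<le> ennreal \<delta>"
    using finite_measure_tail_le[OF sets fin \<delta>(1)] by blast
  show "\<forall>\<^sub>F t in at_right 0. weak_L1_norm (- ball 0 \<rho>) (\<lambda>x. enn2ereal (gauss_max (dilate_measure t V) x)
      - ereal (gauss_peak DIM('a) * measure V (space V) / norm x ^ DIM('a))) \<le> ennreal \<epsilon>"
    using eventually_dilation_factors[OF \<rho> \<delta>(1), of R "DIM('a)"]
  proof (rule eventually_mono)
    fix t assume "0 < t \<and> t * R < \<rho> \<and> (\<rho> / (\<rho> - t * R)) ^ DIM('a) \<le> 1 + \<delta>
      \<and> 1 - \<delta> \<le> exp (- real DIM('a) * (t * R / \<rho> + (t * R)\<^sup>2 / (2 * \<rho>\<^sup>2)))"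
    hence "weak_L1_norm (- ball 0 \<rho>) (\<lambda>x. enn2ereal (gauss_max (dilate_measure t V) x)
        - ereal (gauss_peak DIM('a) * measure V (space V) / norm x ^ DIM('a))) \<le> ennreal (\<delta> * Z)"
      unfolding Z_def using R \<delta> \<rho>
      by (intro weak_L1_norm_gauss_max_deviation_le[OF sets fin]) auto
    also have "\<dots> \<le> ennreal \<epsilon>" by (rule ennreal_leI[OF \<delta>(3)])
    finally show "weak_L1_norm (- ball 0 \<rho>) (\<lambda>x. enn2ereal (gauss_max (dilate_measure t V) x)
        - ereal (gauss_peak DIM('a) * measure V (space V) / norm x ^ DIM('a))) \<le> ennreal \<epsilon>" .
  qed
qed

end
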